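(* Let $\nu:\mathcal{P}(\mathbf{N})\to\mathbf{R}$ be a normalized capacity and let $\mathcal{I}$ be an ideal on $\mathbf{N}$. The following are equivalent: (i) $\nu$ is $\mathcal{I}$-invariant; (ii) there exists a normalized capacity $\rho:\mathscr{B}(\mathrm{Ult}(\mathcal{I}))\to\mathbf{R}$ such that for every $x\in\ell_\infty$, $$\int_{\mathbf{N}} x\,\mathrm{d}\nu=\int_{\mathrm{Ult}(\mathcal{I})}\Big(\int_{\mathbf{N}} x\,\mathrm{d}\mu_{\mathcal{F}}\Big)\,\mathrm{d}\rho(\mathcal{F});$$ (iii) there exists a normalized capacity $\rho:\mathscr{B}(\mathrm{Ult}(\mathcal{I}))\to\mathbf{R}$ such that for every $A\subseteq\mathbf{N}$, $$\nu(A)=\int_{\mathrm{Ult}(\mathcal{I})}\mu_{\mathcal{F}}(A)\,\mathrm{d}\rho(\mathcal{F}).$$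
   Context: $\mathbf{N}$ is the set of positive integers. Given a measurable space $(S,\Sigma)$, a normalized capacity $\nu:\Sigma\to\mathbf{R}$ is a set function with $\nu(A)\le\nu(B)$ whenever $A\subseteq B$, $\nu(\emptyset)=0$, $\nu(S)=1$. An ideal on $\mathbf{N}$ is a family $\mathcal{I}\subseteq\mathcal{P}(\mathbf{N})$ closed under subsets and finite unions, with $\mathbf{N}\notin\mathcal{I}$, and (standing assumption) containing all finite subsets of $\mathbf{N}$. Its dual filter is $\mathcal{I}^\star=\{A\subseteq\mathbf{N}:\mathbf{N}\setminus A\in\mathcal{I}\}$. A normalized capacity $\nu$ on $\mathcal{P}(\mathbf{N})$ is $\mathcal{I}$-invariant if $\nu(A)=\nu(B)$ whenever the symmetric difference $A\triangle B\in\mathcal{I}$. $\beta\mathbf{N}$ denotes the space of ultrafilters on $\mathbf{N}$ with the topology generated by the clopen basis $\{\{\mathcal{F}\in\beta\mathbf{N}:A\in\mathcal{F}\}:A\subseteq\mathbf{N}\}$; $\mathrm{Ult}(\mathcal{I})=\{\mathcal{F}\in\beta\mathbf{N}:\mathcal{I}^\star\subseteq\mathcal{F}\}$ with the relative topology, and $\mathscr{B}(\cdot)$ denotes the Borel $\sigma$-algebra. For $\mathcal{F}\in\mathrm{Ult}(\mathcal{I})$, $\mu_{\mathcal{F}}:\mathcal{P}(\mathbf{N})\to\{0,1\}$ is given by $\mu_{\mathcal{F}}(A)=1$ iff $A\in\mathcal{F}$. $\ell_\infty$ is the space of bounded real sequences. For a bounded function $x$ on $S$ and a normalized capacity $\nu$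 (defined at least on the upper level sets of $x$), the Choquet integral is $\int_S x\,\mathrm{d}\nu=\int_0^\infty\nu(x\ge t)\,\mathrm{d}t+\int_{-\infty}^0[\nu(x\ge t)-\nu(S)]\,\mathrm{d}t$ (improper Riemann integrals). *)

theory Defs
  imports "HOL-Analysis.Analysis"
begin

text \<open>The positive integers N are modelled by the type nat (a relabelling n to n+1).\<close>

definition is_ideal :: "nat set set \<Rightarrow> bool" where
  "is_ideal I \<longleftrightarrow>
     (\<forall>A B. A \<in> I \<and> B \<subseteq> A \<longrightarrow> B \<in> I) \<and>
     (\<forall>A B. A \<in> I \<and> B \<in> I \<longrightarrow> A \<union> B \<in> I) \<and>
     UNIV \<notin> I \<and>
     (\<forall>A. finite A \<longrightarrow> A \<in> I)"

definition dual_filter :: "nat set set \<Rightarrow> nat set set" where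
  "dual_filter I = {A. UNIV - A \<in> I}"

definition is_ultrafilter :: "nat set set \<Rightarrow> bool" where
  "is_ultrafilter F \<longleftrightarrow>
     UNIV \<in> F \<and> {} \<notin> F \<and>
     (\<forall>A B. A \<in> F \<and> A \<subseteq> B \<longrightarrow> B \<in> F) \<and>
     (\<forall>A B. A \<in> F \<and> B \<in> F \<longrightarrow> A \<inter> B \<in> F) \<and>
     (\<forall>A. A \<in> F \<or> UNIV - A \<in> F)"

text \<open>Stone-Cech compactification beta N with its clopen-basis topology.\<close>
definition betaN_topology :: "nat set set topology" where
  "betaN_topology =
     topology_generated_by {{F. is_ultrafilter F \<and> A \<in> F} | A. True}"

definition Ult :: "nat set set \<Rightarrow> nat set set set" where
  "Ult I = {F. is_ultrafilter F \<and> dual_filter I \<subseteq> F}"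

definition Ult_borel :: "nat set set \<Rightarrow> nat set set set set" where
  "Ult_borel I =
     sigma_sets (topspace (subtopology betaN_topology (Ult I)))
                {U. openin (subtopology betaN_topology (Ult I)) U}"

definition normalized_capacity :: "'a set \<Rightarrow> 'a set set \<Rightarrow> ('a set \<Rightarrow> real) \<Rightarrow> bool" where
  "normalized_capacity S \<Sigma> \<nu> \<longleftrightarrow>
     (\<forall>A\<in>\<Sigma>. \<forall>B\<in>\<Sigma>. A \<subseteq> B \<longrightarrow> \<nu> A \<le> \<nu> B) \<and> \<nu> {} = 0 \<and> \<nu> S = 1"

definition invariant :: "nat set set \<Rightarrow> (nat set \<Rightarrow> real) \<Rightarrow> bool" where
  "invariant I \<nu> \<longleftrightarrow> (\<forall>A B. (A - B) \<union> (B - A) \<in> I \<longrightarrow> \<nu> A = \<nu> B)"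

definition mu_uf :: "nat set set \<Rightarrow> nat set \<Rightarrow> real" where
  "mu_uf F A = (if A \<in> F then 1 else 0)"

text \<open>Choquet integral of x over S w.r.t. nu; the improper Riemann integrals
  are rendered as (Henstock-Kurzweil) integrals over the half-lines.\<close>
definition choquet :: "'a set \<Rightarrow> ('a set \<Rightarrow> real) \<Rightarrow> ('a \<Rightarrow> real) \<Rightarrow> real" where
  "choquet S \<nu> x =
     integral {0..} (\<lambda>t. \<nu> {s\<in>S. x s \<ge> t}) +
     integral {..0} (\<lambda>t. \<nu> {s\<in>S. x s \<ge> t} - \<nu> S)"

end

theory Submission
  imports Defs
begin

text \<open>Write \<open>\<hat>A = {F \<in> Ult(I). A \<in> F}\<close>. The Choquet integral of \<open>\<mu>\<^sub>F(A)\<close> with respect to \<open>\<rho>\<close>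
  is \<open>\<rho>(\<hat>A)\<close>, and \<open>\<hat>A\<close> only depends on the class of \<open>A\<close> modulo \<open>I\<close>; this gives (iii) \<open>\<Longrightarrow>\<close> (i),
  while (ii) \<open>\<Longrightarrow>\<close> (iii) is (ii) for indicator functions. For (i) \<open>\<Longrightarrow>\<close> (ii), take the inner
  extension \<open>\<rho>(U) = sup {\<nu>(A) | \<hat>A \<subseteq> U}\<close>. The Choquet integral of \<open>x\<close> with respect to \<open>\<mu>\<^sub>F\<close> is
  the \<open>F\<close>-limit of \<open>x\<close>, and for \<open>s < t\<close> the level sets are sandwiched:
  \<open>\<nu>(x \<ge> t) \<le> \<rho>(F-lim x \<ge> t) \<le> \<nu>(x \<ge> s)\<close>. The upper bound is where invariance enters: if
  \<open>\<hat>A \<subseteq> {F-lim x \<ge> t}\<close>, then \<open>A - {x \<ge> s}\<close> lies in no ultrafilter of \<open>Ult(I)\<close>, hence in \<open>I\<close>.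
  So the two level functions agree outside the countably many discontinuities of the
  monotone function \<open>t \<mapsto> \<nu>(x \<ge> t)\<close>, and the Choquet integrals coincide.\<close>

subsection \<open>Choquet integrals on the real line\<close>

lemma integral_const_on_interval:
  fixes a b c :: real
  assumes "a \<le> b" "{a..b} \<subseteq> T"
  shows "integral T (\<lambda>t. if t \<in> {a..b} then c else 0) = (b - a) * c"
proof -
  have "((\<lambda>t. c) has_integral (b - a) * c) {a..b}"
    using has_integral_const_real[of c a b] assms by simp
  then have "((\<lambda>t. if t \<in> {a..b} then c else 0) has_integral (b - a) * c) T"
    by (rule has_integral_restrict[OF assms(2), of "\<lambda>t. c", THEN iffD2])
  then show ?thesis by blast
qed

lemma choquet_cong:
  assumes "\<And>s. s \<in> S \<Longrightarrow> g s = h s"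
  shows "choquet S m g = choquet S m h"
proof -
  have "{s\<in>S. g s \<ge> t} = {s\<in>S. h s \<ge> t}" for t using assms by auto
  then show ?thesis unfolding choquet_def by simp
qed

lemma choquet_two_valued:
  assumes "m S = 1" "m {} = 0" "\<And>s. s \<in> S \<Longrightarrow> h s = 0 \<or> h s = 1"
  shows "choquet S m h = m {s\<in>S. h s = 1}"
proof -
  let ?c = "m {s\<in>S. h s = 1}"
  have le0: "{s\<in>S. h s \<ge> t} = S" if "t \<le> 0" for t using that assms(3) by force
  have mid: "{s\<in>S. h s \<ge> t} = {s\<in>S. h s = 1}" if "0 < t" "t \<le> 1" for t
    using that assms(3) by force
  have gt1: "{s\<in>S. h s \<ge> t} = {}" if "t > 1" for t using that assms(3) by force
  have "integral {0..} (\<lambda>t. m {s\<in>S. h s \<ge> t})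
      = integral {0..} (\<lambda>t::real. if t \<in> {0..1} then ?c else 0)"
    by (rule integral_spike[where S="{0}"]) (auto simp: mid gt1 assms(2))
  also have "\<dots> = ?c" using integral_const_on_interval[of 0 1 "{0..}" ?c] by simp
  finally have pos: "integral {0..} (\<lambda>t. m {s\<in>S. h s \<ge> t}) = ?c" .
  have "integral {..0} (\<lambda>t. m {s\<in>S. h s \<ge> t} - m S) = integral {..0} (\<lambda>t::real. 0::real)"
    by (rule integral_cong) (auto simp: le0)
  then show ?thesis using pos unfolding choquet_def by simp
qed

lemma choquet_indicator:
  assumes "m UNIV = 1" "m {} = 0"
  shows "choquet UNIV m (indicator A :: 'a \<Rightarrow> real) = m A"
  using choquet_two_valued[of m UNIV "indicator A"] assms by (simp add: indicator_def)

lemma choquet_eq_threshold: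
  assumes "m S = 1"
    and below: "\<And>t. t < L \<Longrightarrow> m {s\<in>S. t \<le> x s} = 1"
    and above: "\<And>t. L < t \<Longrightarrow> m {s\<in>S. t \<le> x s} = 0"
  shows "choquet S m x = L"
proof -
  define f where "f t = m {s\<in>S. t \<le> x s}" for t
  have lt: "f t = 1" if "t < L" for t using below that unfolding f_def by simp
  have gt: "f t = 0" if "L < t" for t using above that unfolding f_def by simp
  have "integral {0..} f + integral {..0} (\<lambda>t. f t - 1) = L"
  proof (cases "L \<ge> 0")
    case True
    have "integral {0..} f = integral {0..} (\<lambda>t::real. if t \<in> {0..L} then 1 else 0)"
      by (rule integral_spike[where S="{L}"]) (auto simp: lt gt)
    also have "\<dots> = L" using integral_const_on_interval[of 0 L "{0..}" 1] True by simp
    finally have "integral {0..} f = L" .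
    moreover have "integral {..0} (\<lambda>t. f t - 1) = integral {..0} (\<lambda>t::real. 0::real)"
      by (rule integral_spike[where S="{L}"]) (use True in \<open>auto simp: lt\<close>)
    ultimately show ?thesis by simp
  next
    case False
    have "integral {0..} f = integral {0..} (\<lambda>t::real. 0::real)"
      by (rule integral_cong) (use False in \<open>auto simp: gt\<close>)
    moreover have "integral {..0} (\<lambda>t. f t - 1)
        = integral {..0} (\<lambda>t. if t \<in> {L..0} then -1 else 0)"
      by (rule integral_spike[where S="{L}"]) (use False in \<open>auto simp: lt gt\<close>)
    moreover have "\<dots> = L" using integral_const_on_interval[of L 0 "{..0}" "-1"] False by simp
    ultimately show ?thesis by simp
  qed
  then show ?thesis unfolding choquet_def f_def assms(1) .
qed

lemma negligible_countable:
  fixes D :: "real set"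
  assumes "countable D"
  shows "negligible D"
proof -
  have "negligible (\<Union> ((\<lambda>x. {x}) ` D))"
    using assms by (intro negligible_countable_Union) auto
  then show ?thesis by simp
qed

lemma antimono_sandwich_eq_off_negligible:
  fixes \<Phi> \<Psi> :: "real \<Rightarrow> real"
  assumes "antimono \<Phi>"
    and lower: "\<And>t. \<Phi> t \<le> \<Psi> t" and upper: "\<And>s t. s < t \<Longrightarrow> \<Psi> t \<le> \<Phi> s"
  obtains D where "negligible D" "\<And>t. t \<notin> D \<Longrightarrow> \<Psi> t = \<Phi> t"
proof
  let ?D = "{t. \<not> isCont \<Phi> t}"
  have "mono (\<lambda>t. - \<Phi> t)" using \<open>antimono \<Phi>\<close> by (simp add: antimono_def mono_def)
  then have "countable {t. \<not> isCont (\<lambda>t. - \<Phi> t) t}" by (rule mono_ctble_discont)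
  moreover have "isCont (\<lambda>t. - \<Phi> t) t \<longleftrightarrow> isCont \<Phi> t" for t
    using isCont_minus[where f="\<lambda>t. - \<Phi> t" and a=t] isCont_minus[where f=\<Phi> and a=t] by auto
  ultimately show "negligible ?D" by (simp add: negligible_countable)
  show "\<Psi> t = \<Phi> t" if "t \<notin> ?D" for t
  proof -
    have "(\<Phi> \<longlongrightarrow> \<Phi> t) (at_left t)"
      using that by (auto simp: isCont_def intro: tendsto_mono[OF at_le])
    moreover have "eventually (\<lambda>s. \<Psi> t \<le> \<Phi> s) (at_left t)"
      by (rule eventually_at_leftI[of "t - 1"]) (auto intro: upper)
    ultimately have "\<Psi> t \<le> \<Phi> t" by (simp add: tendsto_lowerbound)
    then show ?thesis using lower[of t] by simp
  qed
qed

lemma choquet_eq_if_levels_sandwiched: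
  fixes x :: "'a \<Rightarrow> real" and y :: "'b \<Rightarrow> real"
  assumes "m' S' = m S"
    and antimono: "\<And>a b. a \<le> b \<Longrightarrow> m {r\<in>S. b \<le> x r} \<le> m {r\<in>S. a \<le> x r}"
    and lower: "\<And>t. m {r\<in>S. t \<le> x r} \<le> m' {r\<in>S'. t \<le> y r}"
    and upper: "\<And>s t. s < t \<Longrightarrow> m' {r\<in>S'. t \<le> y r} \<le> m {r\<in>S. s \<le> x r}"
  shows "choquet S' m' y = choquet S m x"
proof -
  define \<Phi> where "\<Phi> t = m {r\<in>S. t \<le> x r}" for t
  define \<Psi> where "\<Psi> t = m' {r\<in>S'. t \<le> y r}" for t
  have "antimono \<Phi>" unfolding \<Phi>_def by (intro antimonoI antimono)
  moreover have "\<Phi> t \<le> \<Psi> t" "s < t \<Longrightarrow> \<Psi> t \<le> \<Phi> s" for s t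
    unfolding \<Phi>_def \<Psi>_def using lower upper by auto
  ultimately obtain D where D: "negligible D" "\<And>t. t \<notin> D \<Longrightarrow> \<Psi> t = \<Phi> t"
    by (rule antimono_sandwich_eq_off_negligible) auto
  have "integral {0..} \<Psi> = integral {0..} \<Phi>"
    by (rule integral_spike[OF D(1)]) (use D(2) in auto)
  moreover have "integral {..0} (\<lambda>t. \<Psi> t - m S) = integral {..0} (\<lambda>t. \<Phi> t - m S)"
    by (rule integral_spike[OF D(1)]) (use D(2) in auto)
  ultimately show ?thesis unfolding choquet_def \<Phi>_def \<Psi>_def assms(1) by simp
qed

subsection \<open>Filters and ultrafilters\<close>

definition proper_filter :: "'a set set \<Rightarrow> bool" where
  "proper_filter F \<longleftrightarrow> UNIV \<in> F \<and> {} \<notin> F \<and>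
     (\<forall>A B. A \<in> F \<and> A \<subseteq> B \<longrightarrow> B \<in> F) \<and> (\<forall>A B. A \<in> F \<and> B \<in> F \<longrightarrow> A \<inter> B \<in> F)"

lemma proper_filterI:
  assumes "UNIV \<in> F" "{} \<notin> F" "\<And>A B. A \<in> F \<Longrightarrow> A \<subseteq> B \<Longrightarrow> B \<in> F"
    "\<And>A B. A \<in> F \<Longrightarrow> B \<in> F \<Longrightarrow> A \<inter> B \<in> F"
  shows "proper_filter F"
  using assms unfolding proper_filter_def by blast

lemma proper_filterD:
  assumes "proper_filter F"
  shows "UNIV \<in> F" "{} \<notin> F" "A \<in> F \<Longrightarrow> A \<subseteq> B \<Longrightarrow> B \<in> F"
    "A \<in> F \<Longrightarrow> B \<in> F \<Longrightarrow> A \<inter> B \<in> F"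
  using assms unfolding proper_filter_def by blast+

lemma is_ultrafilter_iff: "is_ultrafilter F \<longleftrightarrow> proper_filter F \<and> (\<forall>A. A \<in> F \<or> UNIV - A \<in> F)"
  unfolding is_ultrafilter_def proper_filter_def by blast

definition filter_adjoin :: "'a set set \<Rightarrow> 'a set \<Rightarrow> 'a set set" where
  "filter_adjoin F B = {C. \<exists>D\<in>F. D \<inter> B \<subseteq> C}"

lemma proper_filter_adjoin:
  assumes F: "proper_filter F" and meets: "\<And>D. D \<in> F \<Longrightarrow> D \<inter> B \<noteq> {}"
  shows "proper_filter (filter_adjoin F B)" "F \<subseteq> filter_adjoin F B" "B \<in> filter_adjoin F B"
proof -
  show "proper_filter (filter_adjoin F B)"
  proof (rule proper_filterI)
    show "UNIV \<in> filter_adjoin F B" "{} \<notin> filter_adjoin F B"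
      using proper_filterD(1)[OF F] meets unfolding filter_adjoin_def by blast+
    show "C \<in> filter_adjoin F B" if "A \<in> filter_adjoin F B" "A \<subseteq> C" for A C
      using that unfolding filter_adjoin_def by blast
    show "C1 \<inter> C2 \<in> filter_adjoin F B" if C: "C1 \<in> filter_adjoin F B" "C2 \<in> filter_adjoin F B" for C1 C2
    proof -
      obtain D1 D2 where "D1 \<in> F" "D1 \<inter> B \<subseteq> C1" "D2 \<in> F" "D2 \<inter> B \<subseteq> C2"
        using C unfolding filter_adjoin_def by blast
      then have "D1 \<inter> D2 \<in> F" "D1 \<inter> D2 \<inter> B \<subseteq> C1 \<inter> C2"
        using proper_filterD(4)[OF F] by blast+
      then show ?thesis unfolding filter_adjoin_def by blast
    qed
  qed
  show "F \<subseteq> filter_adjoin F B" "B \<in> filter_adjoin F B"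
    using proper_filterD(1)[OF F] unfolding filter_adjoin_def by blast+
qed

lemma proper_filter_Union_chain:
  assumes "\<C> \<noteq> {}" and filters: "\<And>F. F \<in> \<C> \<Longrightarrow> proper_filter F"
    and chain: "\<And>F G. F \<in> \<C> \<Longrightarrow> G \<in> \<C> \<Longrightarrow> F \<subseteq> G \<or> G \<subseteq> F"
  shows "proper_filter (\<Union>\<C>)"
proof (rule proper_filterI)
  show "UNIV \<in> \<Union>\<C>" using assms(1) proper_filterD(1)[OF filters] by blast
  show "{} \<notin> \<Union>\<C>" using proper_filterD(2)[OF filters] by blast
  show "C \<in> \<Union>\<C>" if "A \<in> \<Union>\<C>" "A \<subseteq> C" for A C
    using that proper_filterD(3)[OF filters] by blast
  show "A \<inter> B \<in> \<Union>\<C>" if AB: "A \<in> \<Union>\<C>" "B \<in> \<Union>\<C>" for A B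
  proof -
    obtain F G where FG: "F \<in> \<C>" "G \<in> \<C>" "A \<in> F" "B \<in> G" using AB by blast
    then have "A \<inter> B \<in> F \<or> A \<inter> B \<in> G"
      using chain[OF FG(1,2)] proper_filterD(4)[OF filters] by blast
    then show ?thesis using FG by blast
  qed
qed

lemma maximal_proper_filter_is_ultrafilter:
  fixes F :: "nat set set"
  assumes F: "proper_filter F" and maximal: "\<And>G. proper_filter G \<Longrightarrow> F \<subseteq> G \<Longrightarrow> G = F"
  shows "is_ultrafilter F"
  unfolding is_ultrafilter_iff
proof (intro conjI allI F)
  fix B
  show "B \<in> F \<or> UNIV - B \<in> F"
  proof (rule ccontr)
    assume neither: "\<not> (B \<in> F \<or> UNIV - B \<in> F)"
    have meets: "D \<inter> B \<noteq> {}" if "D \<in> F" for D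
      using proper_filterD(3)[OF F that, of "UNIV - B"] neither by blast
    have "filter_adjoin F B = F"
      using proper_filter_adjoin[OF F meets] by (intro maximal)
    then show False using proper_filter_adjoin(3)[OF F meets] neither by simp
  qed
qed

lemma proper_filter_extends_to_ultrafilter:
  fixes F :: "nat set set"
  assumes "proper_filter F"
  obtains U where "is_ultrafilter U" "F \<subseteq> U"
proof -
  let ?\<A> = "{G. proper_filter G \<and> F \<subseteq> G}"
  have "\<exists>M\<in>?\<A>. \<forall>G\<in>?\<A>. M \<subseteq> G \<longrightarrow> G = M"
  proof (rule subset_Zorn_nonempty)
    show "?\<A> \<noteq> {}" using assms by auto
    show "\<Union>\<C> \<in> ?\<A>" if ne: "\<C> \<noteq> {}" and ch: "subset.chain ?\<A> \<C>" for \<C>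
    proof -
      have sub: "\<C> \<subseteq> ?\<A>" and chain: "\<And>F G. F \<in> \<C> \<Longrightarrow> G \<in> \<C> \<Longrightarrow> F \<subseteq> G \<or> G \<subseteq> F"
        using ch unfolding subset.chain_def by blast+
      have "proper_filter (\<Union>\<C>)"
        using sub by (intro proper_filter_Union_chain[OF ne _ chain]) auto
      moreover have "F \<subseteq> \<Union>\<C>" using ne sub by auto
      ultimately show ?thesis by simp
    qed
  qed
  then obtain M where M: "proper_filter M" "F \<subseteq> M"
    and maximal: "\<And>G. proper_filter G \<Longrightarrow> M \<subseteq> G \<Longrightarrow> G = M"
    by auto
  show ?thesis by (rule that[OF maximal_proper_filter_is_ultrafilter[OF M(1) maximal] M(2)])
qed

lemma proper_filter_dual_filter:
  assumes "is_ideal I"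
  shows "proper_filter (dual_filter I)"
proof (rule proper_filterI)
  show "UNIV \<in> dual_filter I" "{} \<notin> dual_filter I"
    using assms unfolding dual_filter_def is_ideal_def by auto
  show "B \<in> dual_filter I" if "A \<in> dual_filter I" "A \<subseteq> B" for A B
  proof -
    have "UNIV - B \<subseteq> UNIV - A" using that(2) by blast
    then show ?thesis using assms that(1) unfolding dual_filter_def is_ideal_def by blast
  qed
  show "A \<inter> B \<in> dual_filter I" if "A \<in> dual_filter I" "B \<in> dual_filter I" for A B
    using assms that unfolding dual_filter_def is_ideal_def by (simp add: Diff_Int)
qed

lemma exists_Ult_mem:
  assumes I: "is_ideal I" and "A \<notin> I"
  obtains F where "F \<in> Ult I" "A \<in> F"
proof -
  have meets: "D \<inter> A \<noteq> {}" if "D \<in> dual_filter I" for D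
  proof
    assume "D \<inter> A = {}"
    then have "A \<subseteq> UNIV - D" by blast
    then show False using I that \<open>A \<notin> I\<close> unfolding dual_filter_def is_ideal_def by blast
  qed
  note adjoin = proper_filter_adjoin[OF proper_filter_dual_filter[OF I] meets]
  obtain U where "is_ultrafilter U" "filter_adjoin (dual_filter I) A \<subseteq> U"
    using proper_filter_extends_to_ultrafilter[OF adjoin(1)] .
  then show thesis using adjoin(2,3) that unfolding Ult_def by blast
qed

definition Ult_set :: "nat set set \<Rightarrow> nat set \<Rightarrow> nat set set set" where
  "Ult_set I A = {F\<in>Ult I. A \<in> F}"

lemma Ult_set_empty: "Ult_set I {} = {}"
  unfolding Ult_set_def Ult_def is_ultrafilter_def by blast

lemma Ult_set_empty_imp_mem_ideal: "is_ideal I \<Longrightarrow> Ult_set I A = {} \<Longrightarrow> A \<in> I"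
  using exists_Ult_mem unfolding Ult_set_def by blast

lemma Ult_set_eq_if_symdiff:
  assumes "(A - B) \<union> (B - A) \<in> I"
  shows "Ult_set I A = Ult_set I B"
proof -
  have "B \<in> F" if F: "F \<in> Ult I" and "A \<in> F" and symdiff: "(A - B) \<union> (B - A) \<in> I" for A B F
  proof -
    have uf: "proper_filter F" using F unfolding Ult_def is_ultrafilter_iff by blast
    have "UNIV - ((A - B) \<union> (B - A)) \<in> dual_filter I"
      using symdiff by (simp add: dual_filter_def Diff_Diff_Int)
    then have "A \<inter> (UNIV - ((A - B) \<union> (B - A))) \<in> F"
      using F \<open>A \<in> F\<close> proper_filterD(4)[OF uf] unfolding Ult_def by blast
    then show "B \<in> F" by (rule proper_filterD(3)[OF uf]) blast
  qed
  moreover have "(B - A) \<union> (A - B) \<in> I" using assms by (simp add: Un_commute)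
  ultimately show ?thesis unfolding Ult_set_def using assms by blast
qed

lemma choquet_mu_uf_set:
  assumes "\<rho> (Ult I) = 1" "\<rho> {} = 0"
  shows "choquet (Ult I) \<rho> (\<lambda>F. mu_uf F A) = \<rho> (Ult_set I A)"
proof -
  have "choquet (Ult I) \<rho> (\<lambda>F. mu_uf F A) = \<rho> {F\<in>Ult I. mu_uf F A = 1}"
    using assms by (intro choquet_two_valued) (auto simp: mu_uf_def)
  also have "{F\<in>Ult I. mu_uf F A = 1} = Ult_set I A" by (auto simp: mu_uf_def Ult_set_def)
  finally show ?thesis .
qed

lemma invariant_if_choquet_mu_uf_representation:
  assumes "\<rho> (Ult I) = 1" "\<rho> {} = 0"
    and "\<And>A. \<nu> A = choquet (Ult I) \<rho> (\<lambda>F. mu_uf F A)"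
  shows "invariant I \<nu>"
  unfolding invariant_def
proof (intro allI impI)
  fix A B assume "(A - B) \<union> (B - A) \<in> I"
  then have "Ult_set I A = Ult_set I B" by (rule Ult_set_eq_if_symdiff)
  then show "\<nu> A = \<nu> B" using assms(3) choquet_mu_uf_set[OF assms(1,2)] by simp
qed

definition uf_limit :: "nat set set \<Rightarrow> (nat \<Rightarrow> real) \<Rightarrow> real" where
  "uf_limit F x = Sup {t. {s. t \<le> x s} \<in> F}"

lemma
  assumes F: "is_ultrafilter F" and x: "bounded (range x)"
  shows less_uf_limit_imp_mem: "t < uf_limit F x \<Longrightarrow> {s. t \<le> x s} \<in> F"
    and mem_imp_le_uf_limit: "{s. t \<le> x s} \<in> F \<Longrightarrow> t \<le> uf_limit F x"
proof -
  let ?T = "{t. {s. t \<le> x s} \<in> F}"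
  have uf: "proper_filter F" using F unfolding is_ultrafilter_iff by blast
  obtain M where M: "\<And>s. \<bar>x s\<bar> \<le> M" using x unfolding bounded_iff by auto
  have "-M \<le> x s" for s using M[of s] by linarith
  then have "{s. -M \<le> x s} = UNIV" by auto
  then have "-M \<in> ?T" using proper_filterD(1)[OF uf] by simp
  then have ne: "?T \<noteq> {}" by blast
  have "t \<le> M" if "t \<in> ?T" for t
  proof (rule ccontr)
    assume "\<not> t \<le> M"
    then have "x s < t" for s using M[of s] by linarith
    then have "{s. t \<le> x s} = {}" by (auto simp: not_le[symmetric])
    then show False using that proper_filterD(2)[OF uf] by simp
  qed
  then have bdd: "bdd_above ?T" by (rule bdd_aboveI)
  show "{s. t \<le> x s} \<in> F" if less: "t < uf_limit F x"
  proof -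
    obtain t' where t': "{s. t' \<le> x s} \<in> F" "t < t'"
      using less less_cSup_iff[OF ne bdd] unfolding uf_limit_def by auto
    have "{s. t' \<le> x s} \<subseteq> {s. t \<le> x s}" using t'(2) by auto
    with t'(1) show ?thesis by (rule proper_filterD(3)[OF uf])
  qed
  show "t \<le> uf_limit F x" if "{s. t \<le> x s} \<in> F"
    unfolding uf_limit_def using cSup_upper[OF _ bdd] that by simp
qed

lemma choquet_mu_uf:
  assumes F: "is_ultrafilter F" and x: "bounded (range x)"
  shows "choquet UNIV (mu_uf F) x = uf_limit F x"
proof (rule choquet_eq_threshold)
  show "mu_uf F UNIV = 1" using F by (simp add: mu_uf_def is_ultrafilter_def)
  show "mu_uf F {s\<in>UNIV. t \<le> x s} = 1" if "t < uf_limit F x" for t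
    using less_uf_limit_imp_mem[OF F x that] by (simp add: mu_uf_def)
  show "mu_uf F {s\<in>UNIV. t \<le> x s} = 0" if "uf_limit F x < t" for t
    using mem_imp_le_uf_limit[OF F x, of t] that by (auto simp: mu_uf_def)
qed

subsection \<open>The inner extension of an invariant capacity\<close>

definition inner_capacity :: "nat set set \<Rightarrow> (nat set \<Rightarrow> real) \<Rightarrow> nat set set set \<Rightarrow> real" where
  "inner_capacity I \<nu> U = Sup {\<nu> A | A. Ult_set I A \<subseteq> U}"

lemma
  assumes "normalized_capacity UNIV UNIV \<nu>"
  shows inner_capacity_ge: "Ult_set I A \<subseteq> U \<Longrightarrow> \<nu> A \<le> inner_capacity I \<nu> U"
    and inner_capacity_le: "(\<And>A. Ult_set I A \<subseteq> U \<Longrightarrow> \<nu> A \<le> c) \<Longrightarrow> inner_capacity I \<nu> U \<le> c"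
proof -
  have "\<nu> A \<le> 1" for A
    using assms unfolding normalized_capacity_def by (metis UNIV_I top_greatest)
  then have bdd: "bdd_above {\<nu> A | A. Ult_set I A \<subseteq> U}" by (intro bdd_aboveI[of _ 1]) auto
  have "{\<nu> A | A. Ult_set I A \<subseteq> U} \<noteq> {}" using Ult_set_empty by blast
  then show "inner_capacity I \<nu> U \<le> c" if "\<And>A. Ult_set I A \<subseteq> U \<Longrightarrow> \<nu> A \<le> c"
    unfolding inner_capacity_def using that by (auto intro: cSup_least)
  show "\<nu> A \<le> inner_capacity I \<nu> U" if "Ult_set I A \<subseteq> U"
    unfolding inner_capacity_def using that by (auto intro: cSup_upper[OF _ bdd])
qed

lemma normalized_capacity_inner_capacity:
  assumes \<nu>: "normalized_capacity UNIV UNIV \<nu>" and I: "is_ideal I" and inv: "invariant I \<nu>"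
  shows "normalized_capacity (Ult I) \<Sigma> (inner_capacity I \<nu>)"
proof -
  have \<nu>_UNIV: "\<nu> UNIV = 1" and \<nu>_empty: "\<nu> {} = 0" and \<nu>_le: "\<And>A. \<nu> A \<le> 1"
    using \<nu> unfolding normalized_capacity_def by (metis UNIV_I top_greatest)+
  have "inner_capacity I \<nu> U \<le> inner_capacity I \<nu> V" if "U \<subseteq> V" for U V
    using that by (intro inner_capacity_le[OF \<nu>] inner_capacity_ge[OF \<nu>]) blast
  moreover have "inner_capacity I \<nu> {} \<le> 0"
  proof (rule inner_capacity_le[OF \<nu>])
    fix A assume "Ult_set I A \<subseteq> {}"
    then have "(A - {}) \<union> ({} - A) \<in> I" using Ult_set_empty_imp_mem_ideal[OF I] by simp
    then show "\<nu> A \<le> 0" using inv \<nu>_empty unfolding invariant_def by simp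
  qed
  moreover have "0 \<le> inner_capacity I \<nu> {}"
    using inner_capacity_ge[OF \<nu>, of I "{}"] Ult_set_empty \<nu>_empty by simp
  moreover have "inner_capacity I \<nu> (Ult I) \<le> 1" by (rule inner_capacity_le[OF \<nu> \<nu>_le])
  moreover have "1 \<le> inner_capacity I \<nu> (Ult I)"
    using inner_capacity_ge[OF \<nu>, of I UNIV] \<nu>_UNIV by (simp add: Ult_set_def)
  ultimately show ?thesis unfolding normalized_capacity_def by auto
qed


lemma level_le_inner_capacity_level:
  assumes \<nu>: "normalized_capacity UNIV UNIV \<nu>" and x: "bounded (range x)"
  shows "\<nu> {s. t \<le> x s} \<le> inner_capacity I \<nu> {F\<in>Ult I. t \<le> uf_limit F x}"
  using mem_imp_le_uf_limit[OF _ x]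
  by (intro inner_capacity_ge[OF \<nu>]) (auto simp: Ult_set_def Ult_def)

lemma inner_capacity_level_le_level:
  assumes \<nu>: "normalized_capacity UNIV UNIV \<nu>" and I: "is_ideal I" and inv: "invariant I \<nu>"
    and x: "bounded (range x)" and "s < t"
  shows "inner_capacity I \<nu> {F\<in>Ult I. t \<le> uf_limit F x} \<le> \<nu> {r. s \<le> x r}"
proof (rule inner_capacity_le[OF \<nu>])
  fix A assume A: "Ult_set I A \<subseteq> {F\<in>Ult I. t \<le> uf_limit F x}"
  let ?X = "{r. s \<le> x r}"
  have "F \<notin> Ult_set I (A - ?X)" for F
  proof
    assume "F \<in> Ult_set I (A - ?X)"
    then have F: "F \<in> Ult I" "A - ?X \<in> F" unfolding Ult_set_def by auto
    have uf: "is_ultrafilter F" and pf: "proper_filter F"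
      using F(1) unfolding Ult_def is_ultrafilter_iff by auto
    have "A \<in> F" using proper_filterD(3)[OF pf F(2)] by blast
    then have "s < uf_limit F x" using A F(1) \<open>s < t\<close> unfolding Ult_set_def by fastforce
    then have "?X \<in> F" by (rule less_uf_limit_imp_mem[OF uf x])
    then have "(A - ?X) \<inter> ?X \<in> F" by (rule proper_filterD(4)[OF pf F(2)])
    moreover have "(A - ?X) \<inter> ?X = {}" by blast
    ultimately show False using proper_filterD(2)[OF pf] by simp
  qed
  then have "A - ?X \<in> I" using Ult_set_empty_imp_mem_ideal[OF I] by blast
  moreover have "(A - A \<inter> ?X) \<union> (A \<inter> ?X - A) = A - ?X" by blast
  ultimately have "(A - A \<inter> ?X) \<union> (A \<inter> ?X - A) \<in> I" by simp
  then have "\<nu> A = \<nu> (A \<inter> ?X)" using inv unfolding invariant_def by blast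
  also have "\<dots> \<le> \<nu> ?X" using \<nu> unfolding normalized_capacity_def by blast
  finally show "\<nu> A \<le> \<nu> ?X" .
qed

lemma choquet_inner_capacity:
  assumes \<nu>: "normalized_capacity UNIV UNIV \<nu>" and I: "is_ideal I" and inv: "invariant I \<nu>"
    and x: "bounded (range x)"
  shows "choquet (Ult I) (inner_capacity I \<nu>) (\<lambda>F. choquet UNIV (mu_uf F) x) = choquet UNIV \<nu> x"
proof -
  have "choquet (Ult I) (inner_capacity I \<nu>) (\<lambda>F. choquet UNIV (mu_uf F) x)
      = choquet (Ult I) (inner_capacity I \<nu>) (\<lambda>F. uf_limit F x)"
    using choquet_mu_uf[OF _ x] by (intro choquet_cong) (simp add: Ult_def)
  also have "\<dots> = choquet UNIV \<nu> x"
  proof (rule choquet_eq_if_levels_sandwiched)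
    show "inner_capacity I \<nu> (Ult I) = \<nu> UNIV"
      using normalized_capacity_inner_capacity[OF \<nu> I inv] \<nu> unfolding normalized_capacity_def by simp
    show "\<nu> {r\<in>UNIV. b \<le> x r} \<le> \<nu> {r\<in>UNIV. a \<le> x r}" if "a \<le> b" for a b
    proof -
      have "{r. b \<le> x r} \<subseteq> {r. a \<le> x r}" using that by auto
      then show ?thesis using \<nu> unfolding normalized_capacity_def by simp
    qed
    show "\<nu> {r\<in>UNIV. t \<le> x r} \<le> inner_capacity I \<nu> {F\<in>Ult I. t \<le> uf_limit F x}" for t
      using level_le_inner_capacity_level[OF \<nu> x] by simp
    show "inner_capacity I \<nu> {F\<in>Ult I. t \<le> uf_limit F x} \<le> \<nu> {r\<in>UNIV. s \<le> x r}" if "s < t" for s t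
      using inner_capacity_level_le_level[OF \<nu> I inv x that] by simp
  qed
  finally show ?thesis .
qed

lemma mu_uf_representation_if_choquet_representation:
  assumes "\<nu> UNIV = 1" "\<nu> {} = 0"
    and ii: "\<And>x. bounded (range x) \<Longrightarrow>
      choquet UNIV \<nu> x = choquet (Ult I) \<rho> (\<lambda>F. choquet UNIV (mu_uf F) x)"
  shows "\<nu> A = choquet (Ult I) \<rho> (\<lambda>F. mu_uf F A)"
proof -
  have "bounded (range (indicator A :: nat \<Rightarrow> real))"
    by (rule bounded_subset[of "{0, 1}"]) (auto simp: indicator_def)
  then have "choquet UNIV \<nu> (indicator A)
      = choquet (Ult I) \<rho> (\<lambda>F. choquet UNIV (mu_uf F) (indicator A))"
    by (rule ii)
  also have "\<dots> = choquet (Ult I) \<rho> (\<lambda>F. mu_uf F A)"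
    by (rule choquet_cong, rule choquet_indicator) (auto simp: mu_uf_def Ult_def is_ultrafilter_def)
  finally show ?thesis by (simp add: choquet_indicator[OF assms(1,2)])
qed

theorem theorem1p1:
  fixes \<nu> :: "nat set \<Rightarrow> real" and I :: "nat set set"
  assumes "normalized_capacity UNIV UNIV \<nu>"
    and "is_ideal I"
  shows "(invariant I \<nu> \<longleftrightarrow>
           (\<exists>\<rho>. normalized_capacity (Ult I) (Ult_borel I) \<rho> \<and>
              (\<forall>x::nat \<Rightarrow> real. bounded (range x) \<longrightarrow>
                 choquet UNIV \<nu> x =
                 choquet (Ult I) \<rho> (\<lambda>F. choquet UNIV (mu_uf F) x)))) \<and>
         (invariant I \<nu> \<longleftrightarrow>
           (\<exists>\<rho>. normalized_capacity (Ult I) (Ult_borel I) \<rho> \<and>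
              (\<forall>A. \<nu> A = choquet (Ult I) \<rho> (\<lambda>F. mu_uf F A))))"
proof -
  let ?capacity = "normalized_capacity (Ult I) (Ult_borel I)"
  have \<nu>: "\<nu> UNIV = 1" "\<nu> {} = 0"
    using assms(1) unfolding normalized_capacity_def by auto
  have i_ii: "\<exists>\<rho>. ?capacity \<rho> \<and> (\<forall>x. bounded (range x) \<longrightarrow>
      choquet UNIV \<nu> x = choquet (Ult I) \<rho> (\<lambda>F. choquet UNIV (mu_uf F) x))"
    if "invariant I \<nu>"
    using normalized_capacity_inner_capacity[OF assms that] choquet_inner_capacity[OF assms that]
    by metis
  have ii_iii: "\<forall>A. \<nu> A = choquet (Ult I) \<rho> (\<lambda>F. mu_uf F A)"
    if "\<forall>x. bounded (range x) \<longrightarrow>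
      choquet UNIV \<nu> x = choquet (Ult I) \<rho> (\<lambda>F. choquet UNIV (mu_uf F) x)" for \<rho>
    using mu_uf_representation_if_choquet_representation[OF \<nu>] that by blast
  have iii_i: "invariant I \<nu>"
    if "?capacity \<rho>" "\<forall>A. \<nu> A = choquet (Ult I) \<rho> (\<lambda>F. mu_uf F A)" for \<rho>
    using that by (intro invariant_if_choquet_mu_uf_representation) (auto simp: normalized_capacity_def)
  show ?thesis using i_ii ii_iii iii_i by metis
qed

end
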